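(* In the setting of the context, for every resolution $\mathcal{A}$ and every unit $G$, the set of units that are visible to $G$ in $\mathcal{A}$ is countable.
   Context: Formulas are built from atoms by $\neg$ (on atoms only), binary $\wedge,\vee$ and unary $!$ (branching recurrence) and $?$ (branching corecurrence). Units. Fix a formula $\mathbb{F}_0$. Oformulas are occurrences of subformulas of $\mathbb{F}_0$. Politerals are occurrences of literals $P$ or $\neg P$ not in the scope of $\neg$. The modal depth of an oformula is the number of its proper superoccurrences of the form $!E$ or $?E$. A unit is $E[\vec x]$, with $E$ an oformula and $\vec x$ a tuple of infinite bitstrings of length equal to the modal depth of $E$. Parenthood: $G_i[\vec x]$ ($i=0,1$) are the children of $(G_0\wedge G_1)[\vec x]$ and of $(G_0\vee G_1)[\vec x]$; the $G[\vec x,y]$ for all infinite bitstrings $y$ are the children of $!G[\vec x]$ and of $?G[\vec x]$. Subunit and superunit are the reflexive-transitive closures of child and its converse. The $\mathbb{F}_0$-origin $\tilde E$ of $E[\vec x]$ is $E$. Politeral, $!$- and $?$-units are defined by their origin. The smallest common superunit of two units is their common superunit lying below all common superunits. Resolutions and driving. A resolution $\mathcal{A}$ maps each $!$-unit $!\tilde E[\vec y]$ to "Unresolved" or to an infinite bitstring $x$. In the latter case it is $\mathcal{A}$-resolved with $\mathcal{A}$-resolvent $\tilde E[\vec y,x]$. $E$ drives $G$ through $H$ iff $H$ is the smallest common superunit of $E,G$ and no proper $?$-superunit of $E$ is a subunit of $H$. $E$ $\mathcal{A}$-strictly drives $G$ iff, for some $H$, $E$ drives $G$ through $H$ and every $!$-unit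 that is a proper superunit of $E$ and a subunit of $H$ is $\mathcal{A}$-resolved with $E$ a subunit of its resolvent. Funits. A funit is $E[\vec w]$ with finite bitstrings $\vec w$. Addresses: $\mathbb{F}_0[\,]$ has the empty address; if $\alpha$ is the address of $E[\vec w]$, then $G_i[\vec w]$ has address $\alpha i.$ and $G[\vec w,u]$ has address $\alpha u.$. $E[\vec w]$ is a funital restriction of $E[\vec x]$ iff each $w_j$ is a prefix of $x_j$. The height of a funit is the maximal length of its bitstrings (or $0$), and it is regular iff all its bitstrings have equal length. Making the numeric move $a$ in a funit with address $\alpha$ means making the move $\alpha a$. Projections. For a run $\Theta$ and a string $\alpha$, $\Theta^\alpha$ keeps the labmoves whose move begins with $\alpha$ and deletes that prefix. $\Theta^{\preceq y}$ keeps the labmoves $\wp\,u.\beta$ with $u$ a finite prefix of $y$ and deletes "$u.$". The projection of $\Omega$ on $\mathbb{F}_0[\,]$ is $\Omega$; on children it is $\Theta^{i.}$ for $\wedge/\vee$-units and $\Theta^{\preceq y}$ for $!/?$-units, where $\Theta$ is the projection on the parent. The run $\Omega$. A funit is $\Phi$-active iff position $\Phi$ contains a move $\alpha\beta$ with $\alpha$ its address. A $\Phi$-prompt is a regular politeral funit whose tuple is empty or whose height is the least integer exceeding the heights of all $\Phi$-active funits. $\Omega$ is produced by a play in rounds. In each round, with $\Phi$ the position at the round's start, player $\bot$ lists the $\Phi$-prompts lexicographically and, for each in turn, makes in it the numeric move $a$, where $a$ is the least natural number not yet made as a numeric move by either player. Then the adversary $\top$ (an arbitrary HPM) makes at most one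 move. $\Omega$ is assumed legal: every move has the form $\alpha a$ with $\alpha$ the address of a politeral funit and $a$ a decimal numeral. Opposite politeral units $L,M$: $\tilde L,\tilde M$ are literals one of which is the negation of the other, and for each $\wp\in\{\top,\bot\}$ the set of $\wp$-labeled moves in the projection of $\Omega$ on $L$ equals the set of $\neg\wp$-labeled moves in the projection on $M$. Visibility. A visibility chain in $\mathcal{A}$ is a nonempty sequence $L_1,M_1,\dots,L_n,M_n$ of politeral units with each $L_i,M_i$ opposite and, for $i<n$, $M_i$ $\mathcal{A}$-strictly driving $L_{i+1}$. Its head is $L_1$ and its tail is $M_n$. A unit $E$ is visible to a unit $G$ in $\mathcal{A}$ iff either $E$ $\mathcal{A}$-strictly drives $G$, or there is a visibility chain in $\mathcal{A}$ whose head is $\mathcal{A}$-strictly driven by $E$ and whose tail $\mathcal{A}$-strictly drives $G$. *)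

theory Defs
  imports Main "HOL-Library.Sublist" "HOL-Library.Char_ord" "HOL-Library.List_Lexorder" "HOL-Library.Countable_Set"
begin

text \<open>Formulas: atoms, negated atoms (negation only on atoms), binary conjunction and
disjunction, branching recurrence (Bang) and branching corecurrence (Quest).\<close>
datatype 'a form = Atom 'a | NegAtom 'a | Conj "'a form" "'a form" | Disj "'a form" "'a form"
  | Bang "'a form" | Quest "'a form"

text \<open>An occurrence (oformula) of a subformula of F0 is represented by its path from the root:
children of Conj/Disj are indexed 0,1; the unique child of Bang/Quest is indexed 0.
subf F0 p is the subformula at path p (None if p is not a valid path).\<close>
fun subf :: "'a form \<Rightarrow> nat list \<Rightarrow> 'a form option" where
  "subf F [] = Some F"
| "subf (Conj a b) (i # p) = (if i = 0 then subf a p else if i = 1 then subf b p else None)"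
| "subf (Disj a b) (i # p) = (if i = 0 then subf a p else if i = 1 then subf b p else None)"
| "subf (Bang a) (i # p) = (if i = 0 then subf a p else None)"
| "subf (Quest a) (i # p) = (if i = 0 then subf a p else None)"
| "subf _ _ = None"

definition is_oformula :: "'a form \<Rightarrow> nat list \<Rightarrow> bool" where
  "is_oformula F0 p \<longleftrightarrow> subf F0 p \<noteq> None"

definition is_modal_f :: "'a form option \<Rightarrow> bool" where
  "is_modal_f f \<longleftrightarrow> (\<exists>a. f = Some (Bang a) \<or> f = Some (Quest a))"

definition is_binary_f :: "'a form option \<Rightarrow> bool" where
  "is_binary_f f \<longleftrightarrow> (\<exists>a b. f = Some (Conj a b) \<or> f = Some (Disj a b))"

definition is_literal_f :: "'a form option \<Rightarrow> bool" where
  "is_literal_f f \<longleftrightarrow> (\<exists>P. f = Some (Atom P) \<or> f = Some (NegAtom P))"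

definition mdepth :: "'a form \<Rightarrow> nat list \<Rightarrow> nat" where
  "mdepth F0 p = card {q. strict_prefix q p \<and> is_modal_f (subf F0 q)}"

text \<open>Infinite bitstrings are functions nat => bool.  A unit is E[xs].\<close>
type_synonym cunit = "nat list \<times> (nat \<Rightarrow> bool) list"

definition is_cunit :: "'a form \<Rightarrow> cunit \<Rightarrow> bool" where
  "is_cunit F0 U \<longleftrightarrow> is_oformula F0 (fst U) \<and> length (snd U) = mdepth F0 (fst U)"

definition is_politeral_unit :: "'a form \<Rightarrow> cunit \<Rightarrow> bool" where
  "is_politeral_unit F0 U \<longleftrightarrow> is_cunit F0 U \<and> is_literal_f (subf F0 (fst U))"

definition is_bang_unit :: "'a form \<Rightarrow> cunit \<Rightarrow> bool" where
  "is_bang_unit F0 U \<longleftrightarrow> is_cunit F0 U \<and> (\<exists>a. subf F0 (fst U) = Some (Bang a))"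

definition is_quest_unit :: "'a form \<Rightarrow> cunit \<Rightarrow> bool" where
  "is_quest_unit F0 U \<longleftrightarrow> is_cunit F0 U \<and> (\<exists>a. subf F0 (fst U) = Some (Quest a))"

definition child :: "'a form \<Rightarrow> cunit \<Rightarrow> cunit \<Rightarrow> bool" where
  "child F0 C P \<longleftrightarrow> is_cunit F0 C \<and> is_cunit F0 P \<and>
     (\<exists>i. fst C = fst P @ [i] \<and>
        ((is_binary_f (subf F0 (fst P)) \<and> snd C = snd P) \<or>
         (is_modal_f (subf F0 (fst P)) \<and> (\<exists>y. snd C = snd P @ [y]))))"

definition subunit :: "'a form \<Rightarrow> cunit \<Rightarrow> cunit \<Rightarrow> bool" where
  "subunit F0 = (child F0)\<^sup>*\<^sup>*"

definition smallest_common_superunit :: "'a form \<Rightarrow> cunit \<Rightarrow> cunit \<Rightarrow> cunit \<Rightarrow> bool" where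
  "smallest_common_superunit F0 E G H \<longleftrightarrow>
     is_cunit F0 H \<and> subunit F0 E H \<and> subunit F0 G H \<and>
     (\<forall>H'. is_cunit F0 H' \<and> subunit F0 E H' \<and> subunit F0 G H' \<longrightarrow> subunit F0 H H')"

text \<open>A resolution maps each !-unit to None ("Unresolved") or Some x (x an infinite bitstring).
Its values on non-!-units are irrelevant.\<close>
type_synonym resolution = "cunit \<Rightarrow> (nat \<Rightarrow> bool) option"

definition resolvent :: "cunit \<Rightarrow> (nat \<Rightarrow> bool) \<Rightarrow> cunit" where
  "resolvent U x = (fst U @ [0], snd U @ [x])"

definition drives :: "'a form \<Rightarrow> cunit \<Rightarrow> cunit \<Rightarrow> cunit \<Rightarrow> bool" where
  "drives F0 E G H \<longleftrightarrow> smallest_common_superunit F0 E G H \<and>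
     \<not> (\<exists>U. is_quest_unit F0 U \<and> subunit F0 E U \<and> U \<noteq> E \<and> subunit F0 U H)"

definition strictly_drives :: "'a form \<Rightarrow> resolution \<Rightarrow> cunit \<Rightarrow> cunit \<Rightarrow> bool" where
  "strictly_drives F0 A E G \<longleftrightarrow> (\<exists>H. drives F0 E G H \<and>
     (\<forall>U. is_bang_unit F0 U \<and> subunit F0 E U \<and> U \<noteq> E \<and> subunit F0 U H \<longrightarrow>
        (\<exists>x. A U = Some x \<and> subunit F0 E (resolvent U x))))"

definition bitchar :: "bool \<Rightarrow> char" where
  "bitchar b = (if b then CHR ''1'' else CHR ''0'')"

function decimal :: "nat \<Rightarrow> string" where
  "decimal n = (if n < 10 then [char_of (48 + n)]
                else decimal (n div 10) @ [char_of (48 + n mod 10)])"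
  by auto
termination by (relation "measure id") auto

definition is_digit :: "char \<Rightarrow> bool" where
  "is_digit c \<longleftrightarrow> c \<in> set ''0123456789''"

definition digits_val :: "string \<Rightarrow> nat" where
  "digits_val ds = foldl (\<lambda>acc c. 10 * acc + (of_char c - 48)) 0 ds"

definition is_numeral :: "string \<Rightarrow> bool" where
  "is_numeral ds \<longleftrightarrow> ds \<noteq> [] \<and> (\<forall>c\<in>set ds. is_digit c)"

type_synonym funit = "nat list \<times> bool list list"

definition is_funit :: "'a form \<Rightarrow> funit \<Rightarrow> bool" where
  "is_funit F0 f \<longleftrightarrow> is_oformula F0 (fst f) \<and> length (snd f) = mdepth F0 (fst f)"

definition is_politeral_funit :: "'a form \<Rightarrow> funit \<Rightarrow> bool" where
  "is_politeral_funit F0 f \<longleftrightarrow> is_funit F0 f \<and> is_literal_f (subf F0 (fst f))"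

fun addr :: "'a form \<Rightarrow> nat list \<Rightarrow> bool list list \<Rightarrow> string" where
  "addr (Conj a b) (i # p) ws = decimal i @ ''.'' @ addr (if i = 0 then a else b) p ws"
| "addr (Disj a b) (i # p) ws = decimal i @ ''.'' @ addr (if i = 0 then a else b) p ws"
| "addr (Bang a) (i # p) (w # ws) = map bitchar w @ ''.'' @ addr a p ws"
| "addr (Quest a) (i # p) (w # ws) = map bitchar w @ ''.'' @ addr a p ws"
| "addr _ _ _ = []"

definition faddr :: "'a form \<Rightarrow> funit \<Rightarrow> string" where
  "faddr F0 f = addr F0 (fst f) (snd f)"

definition fheight :: "funit \<Rightarrow> nat" where
  "fheight f = Max (insert 0 (length ` set (snd f)))"

definition fregular :: "funit \<Rightarrow> bool" where
  "fregular f \<longleftrightarrow> (\<forall>w\<in>set (snd f). \<forall>v\<in>set (snd f). length w = length v)"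

datatype player = Top | Bot

fun neg_pl :: "player \<Rightarrow> player" where
  "neg_pl Top = Bot" | "neg_pl Bot = Top"

type_synonym labmove = "player \<times> string"

text \<open>Projections are given on sets of labmoves (only the sets of labelled moves of
projections matter for the notions below).\<close>
definition strip_prefix :: "string \<Rightarrow> labmove set \<Rightarrow> labmove set" where
  "strip_prefix \<alpha> S = {(pl, \<beta>) | pl \<beta>. (pl, \<alpha> @ \<beta>) \<in> S}"

definition strip_bits :: "(nat \<Rightarrow> bool) \<Rightarrow> labmove set \<Rightarrow> labmove set" where
  "strip_bits y S = {(pl, \<beta>) | pl u \<beta>. (pl, map bitchar u @ ''.'' @ \<beta>) \<in> S \<and>
                                    (\<forall>i<length u. u ! i = y i)}"

fun proj :: "'a form \<Rightarrow> nat list \<Rightarrow> (nat \<Rightarrow> bool) list \<Rightarrow> labmove set \<Rightarrow> labmove set" where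
  "proj (Conj a b) (i # p) xs S = proj (if i = 0 then a else b) p xs (strip_prefix (decimal i @ ''.'') S)"
| "proj (Disj a b) (i # p) xs S = proj (if i = 0 then a else b) p xs (strip_prefix (decimal i @ ''.'') S)"
| "proj (Bang a) (i # p) (y # xs) S = proj a p xs (strip_bits y S)"
| "proj (Quest a) (i # p) (y # xs) S = proj a p xs (strip_bits y S)"
| "proj _ _ _ S = S"

definition fun_active :: "'a form \<Rightarrow> labmove list \<Rightarrow> funit \<Rightarrow> bool" where
  "fun_active F0 \<Phi> f \<longleftrightarrow> is_funit F0 f \<and> (\<exists>pl \<beta>. (pl, faddr F0 f @ \<beta>) \<in> set \<Phi>)"

definition prompt_height :: "'a form \<Rightarrow> labmove list \<Rightarrow> nat" where
  "prompt_height F0 \<Phi> = (LEAST n. \<forall>f. fun_active F0 \<Phi> f \<longrightarrow> fheight f < n)"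

definition is_prompt :: "'a form \<Rightarrow> labmove list \<Rightarrow> funit \<Rightarrow> bool" where
  "is_prompt F0 \<Phi> f \<longleftrightarrow> is_politeral_funit F0 f \<and> fregular f \<and>
     (snd f = [] \<or> fheight f = prompt_height F0 \<Phi>)"

definition prompt_addrs :: "'a form \<Rightarrow> labmove list \<Rightarrow> string list" where
  "prompt_addrs F0 \<Phi> = sorted_list_of_set (faddr F0 ` {f. is_prompt F0 \<Phi> f})"

definition used_nums :: "labmove list \<Rightarrow> nat set" where
  "used_nums \<Phi> = {digits_val ds | pl \<alpha> ds. (pl, \<alpha> @ ds) \<in> set \<Phi> \<and> is_numeral ds \<and>
                                          (\<alpha> = [] \<or> last \<alpha> = CHR ''.'')}"

fun assign :: "nat set \<Rightarrow> string list \<Rightarrow> labmove list" where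
  "assign U [] = []"
| "assign U (\<alpha> # as) = (let a = (LEAST n. n \<notin> U) in (Bot, \<alpha> @ decimal a) # assign (insert a U) as)"

definition bot_round :: "'a form \<Rightarrow> labmove list \<Rightarrow> labmove list" where
  "bot_round F0 \<Phi> = assign (used_nums \<Phi>) (prompt_addrs F0 \<Phi>)"

text \<open>The adversary is given by the (optional) move it makes in each round.
pos F0 tp k is the position at the start of round k.\<close>
fun pos :: "'a form \<Rightarrow> (nat \<Rightarrow> string option) \<Rightarrow> nat \<Rightarrow> labmove list" where
  "pos F0 tp 0 = []"
| "pos F0 tp (Suc k) = (let \<Phi> = pos F0 tp k in
     \<Phi> @ bot_round F0 \<Phi> @ (case tp k of None \<Rightarrow> [] | Some m \<Rightarrow> [(Top, m)]))"

definition Omega :: "'a form \<Rightarrow> (nat \<Rightarrow> string option) \<Rightarrow> labmove set" where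
  "Omega F0 tp = (\<Union>k. set (pos F0 tp k))"

definition legal_move :: "'a form \<Rightarrow> string \<Rightarrow> bool" where
  "legal_move F0 m \<longleftrightarrow> (\<exists>f ds. is_politeral_funit F0 f \<and> is_numeral ds \<and> m = faddr F0 f @ ds)"

definition legal_run :: "'a form \<Rightarrow> labmove set \<Rightarrow> bool" where
  "legal_run F0 S \<longleftrightarrow> (\<forall>pl m. (pl, m) \<in> S \<longrightarrow> legal_move F0 m)"

definition unit_proj :: "'a form \<Rightarrow> (nat \<Rightarrow> string option) \<Rightarrow> cunit \<Rightarrow> labmove set" where
  "unit_proj F0 tp U = proj F0 (fst U) (snd U) (Omega F0 tp)"

definition opposite :: "'a form \<Rightarrow> (nat \<Rightarrow> string option) \<Rightarrow> cunit \<Rightarrow> cunit \<Rightarrow> bool" where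
  "opposite F0 tp L M \<longleftrightarrow> is_politeral_unit F0 L \<and> is_politeral_unit F0 M \<and>
     (\<exists>P. (subf F0 (fst L) = Some (Atom P) \<and> subf F0 (fst M) = Some (NegAtom P)) \<or>
          (subf F0 (fst L) = Some (NegAtom P) \<and> subf F0 (fst M) = Some (Atom P))) \<and>
     (\<forall>pl. {\<beta>. (pl, \<beta>) \<in> unit_proj F0 tp L} = {\<beta>. (neg_pl pl, \<beta>) \<in> unit_proj F0 tp M})"

text \<open>A visibility chain L1,M1,...,Ln,Mn is a nonempty list of pairs (Li, Mi).\<close>
definition vis_chain :: "'a form \<Rightarrow> (nat \<Rightarrow> string option) \<Rightarrow> resolution \<Rightarrow> (cunit \<times> cunit) list \<Rightarrow> bool" where
  "vis_chain F0 tp A cs \<longleftrightarrow> cs \<noteq> [] \<and>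
     (\<forall>LM\<in>set cs. opposite F0 tp (fst LM) (snd LM)) \<and>
     (\<forall>i. Suc i < length cs \<longrightarrow> strictly_drives F0 A (snd (cs ! i)) (fst (cs ! Suc i)))"

definition visible :: "'a form \<Rightarrow> (nat \<Rightarrow> string option) \<Rightarrow> resolution \<Rightarrow> cunit \<Rightarrow> cunit \<Rightarrow> bool" where
  "visible F0 tp A E G \<longleftrightarrow> strictly_drives F0 A E G \<or>
     (\<exists>cs. vis_chain F0 tp A cs \<and> strictly_drives F0 A E (fst (hd cs)) \<and>
           strictly_drives F0 A (snd (last cs)) G)"

end

theory Submission
  imports Defs
begin

text \<open>
  A visible unit strictly drives \<open>G\<close> or the head of a visibility chain,
  and the heads of chains whose tail strictly drives \<open>G\<close> can be collected level by level
  (by chain length).  So it suffices to know two facts: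

  (1) every unit is strictly driven by only countably many units: the driving superunit is
      one of the finitely many superunits of the driven unit, and from there the driver is
      fixed by its oformula, since on the way down every \<open>!\<close> is resolved towards it and no
      \<open>?\<close> occurs;
  (2) every unit has only countably many opposite units: an opposite unit \<open>L\<close> with a nonempty
      tuple is determined by the \<open>\<bottom>\<close>-moves of its projection, because in every round \<open>\<bottom>\<close> moves,
      with a never reused number, in the restriction of \<open>L\<close> to the current prompt height,
      and these heights grow without bound.
\<close>

section \<open>Decimal numerals and dot-terminated addresses\<close>

declare decimal.simps[simp del]

text \<open>Addresses are empty or end with a dot; a numeral can be split off them uniquely.\<close>
definition dot_terminated :: "string \<Rightarrow> bool" where
  "dot_terminated \<alpha> \<longleftrightarrow> \<alpha> = [] \<or> last \<alpha> = CHR ''.''"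

lemma char_eq_code: "(c::char) = e \<longleftrightarrow> (of_char c :: nat) = of_char e"
  by simp

lemma digit_char:
  assumes "d < 10"
  shows "char_of (48 + d) \<noteq> CHR ''.'' \<and> is_digit (char_of (48 + d))
         \<and> (of_char (char_of (48 + d) :: char) :: nat) = 48 + d"
proof -
  have "d \<in> {0,1,2,3,4,5,6,7,8,9}" using assms by auto
  then show ?thesis by (auto simp: is_digit_def char_eq_code)
qed

lemma decimal_correct:
  "decimal n \<noteq> [] \<and> (\<forall>c\<in>set (decimal n). is_digit c \<and> c \<noteq> CHR ''.'')
   \<and> digits_val (decimal n) = n"
proof (induction n rule: decimal.induct)
  case (1 n)
  show ?case
  proof (cases "n < 10")
    case True
    then show ?thesis using digit_char[of n] by (simp add: digits_val_def decimal.simps[of n])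
  next
    case False
    have "digits_val (decimal n) = 10 * (n div 10) + n mod 10"
      using False 1 digit_char[of "n mod 10"] by (simp add: digits_val_def decimal.simps[of n])
    then show ?thesis using False 1 digit_char[of "n mod 10"] by (auto simp: decimal.simps[of n])
  qed
qed

lemma decimal_no_dot: "CHR ''.'' \<notin> set (decimal n)"
  using decimal_correct by blast

lemma decimal_inj: "decimal m = decimal n \<Longrightarrow> m = n"
  by (metis decimal_correct)

lemma dot_split:
  assumes "CHR ''.'' \<notin> set a" "CHR ''.'' \<notin> set c" "a @ CHR ''.'' # b = c @ CHR ''.'' # d"
  shows "a = c \<and> b = d"
  using assms
proof (induction a arbitrary: c)
  case Nil then show ?case by (cases c) auto
next
  case (Cons x a) then show ?case by (cases c) auto
qed

lemma numeral_suffix_unique: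
  assumes "dot_terminated \<alpha>" "dot_terminated \<alpha>'" "\<alpha> @ decimal n = \<alpha>' @ decimal n'"
  shows "\<alpha> = \<alpha>' \<and> n = n'"
proof -
  have *: "\<alpha> = \<alpha>' \<and> n = n'"
    if dt: "dot_terminated \<alpha>'" and eq: "\<alpha> @ decimal n = \<alpha>' @ decimal n'"
      and le: "length \<alpha> \<le> length \<alpha>'" for \<alpha> \<alpha>' n n'
  proof -
    obtain t where t: "\<alpha>' = \<alpha> @ t" "decimal n = t @ decimal n'"
      using eq le by (auto simp: append_eq_append_conv_if) (metis append_take_drop_id)
    have "t = []"
    proof (rule ccontr)
      assume "t \<noteq> []"
      then have "last t = CHR ''.''" using dt t(1) by (simp add: dot_terminated_def)
      then show False using t(2) \<open>t \<noteq> []\<close> decimal_no_dot by (metis Un_iff last_in_set set_append)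
    qed
    then show ?thesis using t decimal_inj by auto
  qed
  show ?thesis
    using *[OF assms(2,3)] *[OF assms(1) assms(3)[symmetric]] by (cases "length \<alpha> \<le> length \<alpha>'") auto
qed

section \<open>Well-formed paths\<close>

text \<open>Units and funits satisfy it, and it is the
  natural induction principle for addresses and projections.\<close>
fun wf_path :: "'a form \<Rightarrow> nat list \<Rightarrow> 'b list \<Rightarrow> bool" where
  "wf_path F [] ws = (ws = [])"
| "wf_path (Conj a b) (i # p) ws = (i \<le> 1 \<and> wf_path (if i = 0 then a else b) p ws)"
| "wf_path (Disj a b) (i # p) ws = (i \<le> 1 \<and> wf_path (if i = 0 then a else b) p ws)"
| "wf_path (Bang a) (i # p) ws = (i = 0 \<and> ws \<noteq> [] \<and> wf_path a p (tl ws))"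
| "wf_path (Quest a) (i # p) ws = (i = 0 \<and> ws \<noteq> [] \<and> wf_path a p (tl ws))"
| "wf_path _ _ _ = False"

lemma wf_path_leaf [simp]:
  "wf_path (Atom v) p ws \<longleftrightarrow> p = [] \<and> ws = []"
  "wf_path (NegAtom v) p ws \<longleftrightarrow> p = [] \<and> ws = []"
  "wf_path (Bang a) p [] \<longleftrightarrow> p = []"
  "wf_path (Quest a) p [] \<longleftrightarrow> p = []"
  by (cases p; auto)+

lemma form_cases:
  obtains (binary) a b where "F = Conj a b \<or> F = Disj a b"
    | (modal) a where "F = Bang a \<or> F = Quest a"
    | (literal) P where "F = Atom P \<or> F = NegAtom P"
  by (cases F) auto

lemma binary_step:
  assumes "F = Conj a b \<or> F = Disj a b"
  shows "proj F (i # p) xs S = proj (if i = 0 then a else b) p xs (strip_prefix (decimal i @ ''.'') S)"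
    and "addr F (i # p) ws = decimal i @ ''.'' @ addr (if i = 0 then a else b) p ws"
    and "wf_path F (i # p) vs \<longleftrightarrow> i \<le> 1 \<and> wf_path (if i = 0 then a else b) p vs"
    and "subf F (i # p) = (if i \<le> 1 then subf (if i = 0 then a else b) p else None)"
    and "\<not> is_modal_f (Some F)"
  using assms by (auto simp: is_modal_f_def)

lemma modal_step:
  assumes "F = Bang a \<or> F = Quest a"
  shows "proj F (i # p) (y # xs) S = proj a p xs (strip_bits y S)"
    and "addr F (i # p) (w # ws) = map bitchar w @ ''.'' @ addr a p ws"
    and "wf_path F (i # p) vs \<longleftrightarrow> i = 0 \<and> vs \<noteq> [] \<and> wf_path a p (tl vs)"
    and "subf F (i # p) = (if i = 0 then subf a p else None)"
    and "is_modal_f (Some F)"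
  using assms by (auto simp: is_modal_f_def)

lemma literal_step:
  assumes "F = Atom P \<or> F = NegAtom P"
  shows "\<not> wf_path F (i # p) vs" and "subf F (i # p) = None"
  using assms by auto

lemma mdepth_Nil: "mdepth F [] = 0"
  by (simp add: mdepth_def)

lemma mdepth_Cons:
  assumes "\<And>q. subf F (i # q) = subf c q"
  shows "mdepth F (i # p) = (if is_modal_f (Some F) then 1 else 0) + mdepth c p"
proof -
  have split: "strict_prefix q (i # p) \<longleftrightarrow> q = [] \<or> (\<exists>q'. q = i # q' \<and> strict_prefix q' p)" for q
    by (cases q) auto
  let ?M = "{q. strict_prefix q p \<and> is_modal_f (subf c q)}"
  have "{q. strict_prefix q (i # p) \<and> is_modal_f (subf F q)} =
      (if is_modal_f (Some F) then {[]} else {}) \<union> Cons i ` ?M"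
    using assms by (auto simp: split)
  moreover have "finite ?M"
    by (rule finite_subset[of _ "set (prefixes p)"]) auto
  moreover have "card (Cons i ` ?M) = card ?M"
    by (rule card_image) auto
  ultimately show ?thesis unfolding mdepth_def by (auto simp: card_insert_if)
qed

lemma wf_path_if_depth: "subf F p \<noteq> None \<Longrightarrow> length ws = mdepth F p \<Longrightarrow> wf_path F p ws"
proof (induction p arbitrary: F ws)
  case Nil then show ?case by (simp add: mdepth_Nil)
next
  case (Cons i p)
  show ?case
  proof (cases F rule: form_cases)
    case (binary a b)
    note step = binary_step[OF binary]
    have "i \<le> 1" using Cons.prems(1) step(4) by (auto split: if_splits)
    then show ?thesis
      using Cons.prems Cons.IH[of "if i = 0 then a else b" ws]
        mdepth_Cons[of F i "if i = 0 then a else b" p]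
      by (simp add: step)
  next
    case (modal a)
    note step = modal_step[OF modal]
    have "i = 0" using Cons.prems(1) step(4) by (auto split: if_splits)
    then show ?thesis
      using Cons.prems Cons.IH[of a "tl ws"] mdepth_Cons[of F i a p] by (cases ws) (auto simp: step)
  next
    case (literal P)
    then show ?thesis using Cons.prems(1) literal_step by metis
  qed
qed

lemma cunit_wf: "is_cunit F U \<Longrightarrow> wf_path F (fst U) (snd U)"
  by (simp add: is_cunit_def is_oformula_def wf_path_if_depth)

lemma funit_wf: "is_funit F f \<Longrightarrow> wf_path F (fst f) (snd f)"
  by (simp add: is_funit_def is_oformula_def wf_path_if_depth)

text \<open>Paths of \<open>F\<close> are binary strings no longer than \<open>F\<close>, so there are finitely many.\<close>
lemma wf_path_length: "wf_path F p ws \<Longrightarrow> length ws \<le> length p"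
  by (induction F p ws rule: wf_path.induct) (fastforce split: if_splits)+

lemma wf_path_bounded: "wf_path F p ws \<Longrightarrow> length p \<le> size F \<and> set p \<subseteq> {0, 1}"
  by (induction F p ws rule: wf_path.induct) (auto split: if_splits)

lemma addr_Nil: "addr F [] ws = []"
  by (cases F) auto

lemma addr_dot_terminated: "dot_terminated (addr F p ws)"
  by (induction F p ws rule: addr.induct) (auto simp: dot_terminated_def)

lemma faddr_dot_terminated: "dot_terminated (faddr F0 f)"
  by (simp add: faddr_def addr_dot_terminated)

lemma addr_has_dot: "wf_path F p ws \<Longrightarrow> p \<noteq> [] \<Longrightarrow> CHR ''.'' \<in> set (addr F p ws)"
  by (induction F p ws rule: addr.induct) auto

lemma addr_length: "wf_path F p ws \<Longrightarrow> w \<in> set ws \<Longrightarrow> length w \<le> length (addr F p ws)"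
  by (induction F p ws rule: addr.induct) (auto split: if_splits)

section \<open>Projections of single moves\<close>

definition bits_prefix :: "bool list \<Rightarrow> (nat \<Rightarrow> bool) \<Rightarrow> bool" where
  "bits_prefix w y \<longleftrightarrow> (\<forall>i<length w. w ! i = y i)"

lemma proj_Nil: "proj F [] xs S = S"
  by (cases F) auto

lemma proj_Union: "proj F p xs (\<Union>\<S>) = (\<Union>S\<in>\<S>. proj F p xs S)"
proof (induction p arbitrary: F xs \<S>)
  case Nil then show ?case by (simp add: proj_Nil)
next
  case (Cons i p)
  have strip_prefix_Union: "strip_prefix \<alpha> (\<Union>\<S>) = \<Union>(strip_prefix \<alpha> ` \<S>)" for \<alpha> \<S>
    by (auto simp: strip_prefix_def)
  have strip_bits_Union: "strip_bits y (\<Union>\<S>) = \<Union>(strip_bits y ` \<S>)" for y \<S>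
    by (auto simp: strip_bits_def)
  show ?case
    by (cases F; cases xs) (simp_all add: Cons.IH strip_prefix_Union strip_bits_Union image_image)
qed

lemma proj_mono: "S \<subseteq> T \<Longrightarrow> proj F p xs S \<subseteq> proj F p xs T"
  using proj_Union[of F p xs "{S, T}"] by (auto simp: Un_absorb1)

lemma proj_empty: "proj F p xs {} = {}"
  using proj_Union[of F p xs "{}"] by simp

lemma proj_via_singletons: "z \<in> proj F p xs S \<longleftrightarrow> (\<exists>s\<in>S. z \<in> proj F p xs {s})"
  using proj_Union[of F p xs "(\<lambda>s. {s}) ` S"] by simp

lemma proj_label: "(pl, \<beta>) \<in> proj F p xs S \<Longrightarrow> \<exists>m. (pl, m) \<in> S"
  by (induction F p xs S arbitrary: \<beta> rule: proj.induct)
    (auto simp: strip_prefix_def strip_bits_def)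

lemma bitchar_no_dot: "CHR ''.'' \<notin> set (map bitchar w)"
  by (auto simp: bitchar_def)

lemma map_bitchar_inj: "map bitchar u = map bitchar w \<Longrightarrow> u = w"
proof -
  have "inj bitchar" by (auto simp: inj_def bitchar_def split: if_splits)
  then show "map bitchar u = map bitchar w \<Longrightarrow> u = w" by (simp add: inj_map_eq_map)
qed

lemma strip_prefix_move:
  assumes "CHR ''.'' \<notin> set a" "CHR ''.'' \<notin> set b"
  shows "strip_prefix (a @ ''.'') {(pl, b @ ''.'' @ r)} = (if a = b then {(pl, r)} else {})"
  using dot_split[OF assms(1,2)] by (auto simp: strip_prefix_def)

lemma strip_bits_move:
  "strip_bits y {(pl, map bitchar w @ ''.'' @ r)} = (if bits_prefix w y then {(pl, r)} else {})"
proof -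
  have "map bitchar u @ ''.'' @ \<beta> = map bitchar w @ ''.'' @ r \<longleftrightarrow> u = w \<and> \<beta> = r" for u \<beta>
    using dot_split[OF bitchar_no_dot bitchar_no_dot] map_bitchar_inj by auto
  then show ?thesis by (auto simp: strip_bits_def bits_prefix_def)
qed

lemma proj_Cons_dot_free:
  assumes "wf_path F (i # q) xs" "CHR ''.'' \<notin> set m"
  shows "proj F (i # q) xs {(pl, m)} = {}"
proof -
  have "strip_prefix (\<alpha> @ ''.'') {(pl, m)} = {}" for \<alpha>
    using assms(2) by (auto simp: strip_prefix_def)
  moreover have "strip_bits y {(pl, m)} = {}" for y
    using assms(2) by (auto simp: strip_bits_def)
  ultimately show ?thesis
  proof (cases F rule: form_cases)
    case (modal a)
    then show ?thesis using assms(1) \<open>\<And>y. strip_bits y _ = {}\<close>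
      by (cases xs) (auto simp: modal_step proj_empty)
  qed (use assms(1) binary_step literal_step proj_empty in metis)+
qed

lemma proj_addressed_move:
  assumes "wf_path F p ws" "wf_path F p' xs" "CHR ''.'' \<notin> set \<gamma>" "CHR ''.'' \<notin> set \<beta>"
  shows "(pl, \<beta>) \<in> proj F p' xs {(pl0, addr F p ws @ \<gamma>)} \<longleftrightarrow>
           p' = p \<and> \<beta> = \<gamma> \<and> pl = pl0 \<and> list_all2 bits_prefix ws xs"
  using assms(1,2)
proof (induction p' arbitrary: F p ws xs)
  case Nil
  show ?case
  proof (cases p)
    case Nil then show ?thesis using Nil.prems by (auto simp: proj_Nil addr_Nil)
  next
    case (Cons i p0)
    then have "CHR ''.'' \<in> set (addr F p ws)" using addr_has_dot Nil.prems(1) by blast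
    then show ?thesis using Nil.prems(2) assms(4) Cons by (auto simp: proj_Nil)
  qed
next
  case (Cons i' q)
  show ?case
  proof (cases p)
    case Nil
    then show ?thesis using Cons.prems proj_Cons_dot_free[OF Cons.prems(2) assms(3)] by (simp add: addr_Nil)
  next
    case (Cons i p0)
    show ?thesis
    proof (cases F rule: form_cases)
      case (binary a b)
      note step = binary_step[OF binary]
      have "strip_prefix (decimal i' @ ''.'') {(pl0, addr F p ws @ \<gamma>)} =
          (if i' = i then {(pl0, addr (if i = 0 then a else b) p0 ws @ \<gamma>)} else {})"
        using strip_prefix_move[OF decimal_no_dot decimal_no_dot] decimal_inj \<open>p = i # p0\<close>
        by (auto simp: step(2))
      then show ?thesis
        using Cons.IH[of "if i = 0 then a else b" p0 ws xs] Cons.prems \<open>p = i # p0\<close>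
        by (auto simp: step(1,3) proj_empty)
    next
      case (modal a)
      note step = modal_step[OF modal]
      obtain w ws' y xs' where tuples: "ws = w # ws'" "xs = y # xs'"
        using Cons.prems \<open>p = i # p0\<close> by (cases ws; cases xs) (auto simp: step(3))
      have "strip_bits y {(pl0, addr F p ws @ \<gamma>)} =
          (if bits_prefix w y then {(pl0, addr a p0 ws' @ \<gamma>)} else {})"
        using strip_bits_move \<open>p = i # p0\<close> tuples by (simp add: step(2))
      then show ?thesis
        using Cons.IH[of a p0 ws' xs'] Cons.prems \<open>p = i # p0\<close> tuples
        by (auto simp: step(1,3) proj_empty)
    next
      case (literal P)
      then show ?thesis using Cons.prems(2) literal_step by metis
    qed
  qed
qed

section \<open>The strategy of \<open>\<bottom>\<close> in the run \<open>\<Omega>\<close>\<close>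

lemma used_nums_finite: "finite (used_nums \<Phi>)"
proof -
  have "used_nums \<Phi> \<subseteq> (\<Union>x\<in>set \<Phi>. digits_val ` set (suffixes (snd x)))"
  proof
    fix n assume "n \<in> used_nums \<Phi>"
    then obtain pl \<alpha> ds where "n = digits_val ds" "(pl, \<alpha> @ ds) \<in> set \<Phi>"
      by (auto simp: used_nums_def)
    then show "n \<in> (\<Union>x\<in>set \<Phi>. digits_val ` set (suffixes (snd x)))"
      by (intro UN_I[of "(pl, \<alpha> @ ds)"]) (auto simp: suffix_def)
  qed
  then show ?thesis by (rule finite_subset) auto
qed

lemma used_nums_memI:
  assumes "(pl, \<alpha> @ decimal n) \<in> set \<Phi>" "dot_terminated \<alpha>"
  shows "n \<in> used_nums \<Phi>"
proof -
  have "is_numeral (decimal n)" "digits_val (decimal n) = n"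
    using decimal_correct by (auto simp: is_numeral_def)
  then show ?thesis using assms unfolding used_nums_def dot_terminated_def
    by (intro CollectI exI[of _ pl] exI[of _ \<alpha>] exI[of _ "decimal n"]) auto
qed

lemma assign_explicit:
  assumes "finite U"
  shows "\<exists>ns. length ns = length as \<and> distinct ns \<and> set ns \<inter> U = {} \<and>
           assign U as = map (\<lambda>(\<alpha>, a). (Bot, \<alpha> @ decimal a)) (zip as ns)"
  using assms
proof (induction as arbitrary: U)
  case Nil then show ?case by simp
next
  case (Cons \<alpha> as)
  define a where "a = (LEAST n. n \<notin> U)"
  have fresh: "a \<notin> U"
    unfolding a_def by (rule LeastI_ex) (metis Cons.prems ex_new_if_finite infinite_UNIV_nat)
  obtain ns where "length ns = length as" "distinct ns" "set ns \<inter> insert a U = {}"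
      "assign (insert a U) as = map (\<lambda>(\<alpha>, a). (Bot, \<alpha> @ decimal a)) (zip as ns)"
    using Cons.IH[of "insert a U"] Cons.prems by blast
  then show ?case using fresh by (intro exI[of _ "a # ns"]) (auto simp: Let_def a_def[symmetric])
qed

text \<open>Prompts are regular of one fixed height, hence there are finitely many; so
  \<open>prompt_addrs\<close> lists exactly their addresses.\<close>
lemma prompts_finite: "finite {f. is_prompt F0 \<Phi> f}"
proof -
  let ?h = "prompt_height F0 \<Phi>"
  let ?P = "{p :: nat list. set p \<subseteq> {0, 1} \<and> length p \<le> size F0}"
  let ?W = "{ws. set ws \<subseteq> {w :: bool list. set w \<subseteq> UNIV \<and> length w \<le> ?h} \<and> length ws \<le> size F0}"
  have "{f. is_prompt F0 \<Phi> f} \<subseteq> ?P \<times> ?W"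
  proof
    fix f assume "f \<in> {f. is_prompt F0 \<Phi> f}"
    then have prompt: "is_prompt F0 \<Phi> f" by simp
    then have wf: "wf_path F0 (fst f) (snd f)"
      by (simp add: is_prompt_def is_politeral_funit_def funit_wf)
    have "length w \<le> ?h" if "w \<in> set (snd f)" for w
    proof -
      have "length w \<le> fheight f" unfolding fheight_def using that by (intro Max_ge) auto
      moreover have "fheight f = ?h" using prompt that by (auto simp: is_prompt_def)
      ultimately show ?thesis by simp
    qed
    then show "f \<in> ?P \<times> ?W"
      using wf_path_bounded[OF wf] wf_path_length[OF wf] by (cases f) auto
  qed
  moreover have "finite (?P \<times> ?W)"
    by (intro finite_cartesian_product finite_lists_length_le) (auto intro: finite_lists_length_le)
  ultimately show ?thesis by (rule finite_subset)
qed

lemma prompt_addrs_set: "set (prompt_addrs F0 \<Phi>) = faddr F0 ` {f. is_prompt F0 \<Phi> f}"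
  unfolding prompt_addrs_def using prompts_finite by (intro set_sorted_list_of_set) blast

lemma bot_round_explicit:
  obtains ns where "distinct ns" "set ns \<inter> used_nums \<Phi> = {}"
    "set (bot_round F0 \<Phi>) = (\<lambda>(\<alpha>, a). (Bot, \<alpha> @ decimal a)) ` set (zip (prompt_addrs F0 \<Phi>) ns)"
    "length ns = length (prompt_addrs F0 \<Phi>)"
  using assign_explicit[OF used_nums_finite[of \<Phi>], of "prompt_addrs F0 \<Phi>"]
  unfolding bot_round_def by auto

lemma bot_round_move:
  assumes "(pl, m) \<in> set (bot_round F0 \<Phi>)"
  shows "pl = Bot \<and> (\<exists>f a. is_prompt F0 \<Phi> f \<and> m = faddr F0 f @ decimal a)"
proof -
  obtain ns where "distinct ns" "set ns \<inter> used_nums \<Phi> = {}"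
    "set (bot_round F0 \<Phi>) = (\<lambda>(\<alpha>, a). (Bot, \<alpha> @ decimal a)) ` set (zip (prompt_addrs F0 \<Phi>) ns)"
    "length ns = length (prompt_addrs F0 \<Phi>)"
    by (rule bot_round_explicit)
  then obtain \<alpha> a where "(\<alpha>, a) \<in> set (zip (prompt_addrs F0 \<Phi>) ns)" "pl = Bot" "m = \<alpha> @ decimal a"
    using assms by auto
  then show ?thesis using set_zip_leftD prompt_addrs_set by fastforce
qed

lemma bot_round_covers_prompt:
  assumes "is_prompt F0 \<Phi> f"
  shows "\<exists>a. (Bot, faddr F0 f @ decimal a) \<in> set (bot_round F0 \<Phi>)"
proof -
  obtain ns where "distinct ns" "set ns \<inter> used_nums \<Phi> = {}"
    "set (bot_round F0 \<Phi>) = (\<lambda>(\<alpha>, a). (Bot, \<alpha> @ decimal a)) ` set (zip (prompt_addrs F0 \<Phi>) ns)"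
    and len: "length ns = length (prompt_addrs F0 \<Phi>)"
    by (rule bot_round_explicit)
  moreover obtain j where "j < length (prompt_addrs F0 \<Phi>)" "prompt_addrs F0 \<Phi> ! j = faddr F0 f"
    using assms prompt_addrs_set by (metis imageI in_set_conv_nth mem_Collect_eq)
  ultimately have "(faddr F0 f, ns ! j) \<in> set (zip (prompt_addrs F0 \<Phi>) ns)"
    by (metis in_set_zip fst_conv snd_conv)
  then show ?thesis using \<open>set (bot_round F0 \<Phi>) = _\<close> by force
qed

lemma pos_mono: "k \<le> k' \<Longrightarrow> set (pos F0 tp k) \<subseteq> set (pos F0 tp k')"
  by (induction k' rule: dec_induct) (auto simp: Let_def)

lemma mem_Omega: "x \<in> Omega F0 tp \<longleftrightarrow> (\<exists>k. x \<in> set (pos F0 tp k))"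
  by (simp add: Omega_def)

lemma bot_move_Suc:
  "(Bot, m) \<in> set (pos F0 tp (Suc k)) \<Longrightarrow>
     (Bot, m) \<in> set (pos F0 tp k) \<or> (Bot, m) \<in> set (bot_round F0 (pos F0 tp k))"
  by (cases "tp k") (auto simp: Let_def)

lemma bot_move_shape:
  assumes "(Bot, m) \<in> Omega F0 tp"
  shows "\<exists>f n. is_funit F0 f \<and> m = faddr F0 f @ decimal n"
proof -
  have "(Bot, m) \<in> set (pos F0 tp k) \<Longrightarrow> \<exists>f n. is_funit F0 f \<and> m = faddr F0 f @ decimal n" for k
  proof (induction k)
    case (Suc k)
    from bot_move_Suc[OF Suc.prems] show ?case
    proof
      assume "(Bot, m) \<in> set (bot_round F0 (pos F0 tp k))"
      then obtain f a where "is_prompt F0 (pos F0 tp k) f" "m = faddr F0 f @ decimal a"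
        using bot_round_move by blast
      moreover have "is_funit F0 f" using calculation(1) by (simp add: is_prompt_def is_politeral_funit_def)
      ultimately show ?case by blast
    qed (rule Suc.IH)
  qed simp
  then show ?thesis using assms by (auto simp: mem_Omega)
qed

lemma bot_round_number:
  assumes "(pl, \<alpha> @ decimal n) \<in> set (bot_round F0 \<Phi>)" "dot_terminated \<alpha>"
  obtains ns where "distinct ns" "set ns \<inter> used_nums \<Phi> = {}"
    "(\<alpha>, n) \<in> set (zip (prompt_addrs F0 \<Phi>) ns)"
    "\<And>\<alpha>'. (Bot, \<alpha>' @ decimal n) \<in> set (bot_round F0 \<Phi>) \<Longrightarrow> dot_terminated \<alpha>' \<Longrightarrow>
       (\<alpha>', n) \<in> set (zip (prompt_addrs F0 \<Phi>) ns)"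
proof -
  obtain ns where ns: "distinct ns" "set ns \<inter> used_nums \<Phi> = {}"
    "set (bot_round F0 \<Phi>) = (\<lambda>(\<alpha>, a). (Bot, \<alpha> @ decimal a)) ` set (zip (prompt_addrs F0 \<Phi>) ns)"
    "length ns = length (prompt_addrs F0 \<Phi>)"
    by (rule bot_round_explicit)
  have zip_mem: "(\<beta>, n) \<in> set (zip (prompt_addrs F0 \<Phi>) ns)"
    if mem: "(pl', \<beta> @ decimal n) \<in> set (bot_round F0 \<Phi>)" and dt: "dot_terminated \<beta>" for pl' \<beta>
  proof -
    obtain \<gamma> a where \<gamma>: "(\<gamma>, a) \<in> set (zip (prompt_addrs F0 \<Phi>) ns)" "\<beta> @ decimal n = \<gamma> @ decimal a"
      using mem ns(3) by auto
    have "\<gamma> \<in> set (prompt_addrs F0 \<Phi>)" using \<gamma>(1) by (rule set_zip_leftD)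
    then have "dot_terminated \<gamma>" unfolding prompt_addrs_set using faddr_dot_terminated by blast
    then have "\<beta> = \<gamma> \<and> n = a" using numeral_suffix_unique[OF dt] \<gamma>(2) by blast
    then show ?thesis using \<gamma>(1) by simp
  qed
  show ?thesis using that[OF ns(1,2) zip_mem[OF assms]] zip_mem by blast
qed

lemma bot_round_number_fresh:
  assumes "(pl, \<alpha> @ decimal n) \<in> set (bot_round F0 \<Phi>)" "dot_terminated \<alpha>"
  shows "n \<notin> used_nums \<Phi>"
proof (rule bot_round_number[OF assms])
  fix ns assume "set ns \<inter> used_nums \<Phi> = {}" "(\<alpha>, n) \<in> set (zip (prompt_addrs F0 \<Phi>) ns)"
  then show ?thesis by (blast dest: set_zip_rightD)
qed

lemma bot_round_number_unique:
  assumes "(Bot, \<alpha>1 @ decimal n) \<in> set (bot_round F0 \<Phi>)" "(Bot, \<alpha>2 @ decimal n) \<in> set (bot_round F0 \<Phi>)"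
    and "dot_terminated \<alpha>1" "dot_terminated \<alpha>2"
  shows "\<alpha>1 = \<alpha>2"
proof (rule bot_round_number[OF assms(1,3)])
  fix ns assume "distinct ns" "(\<alpha>1, n) \<in> set (zip (prompt_addrs F0 \<Phi>) ns)"
    "\<And>\<alpha>'. (Bot, \<alpha>' @ decimal n) \<in> set (bot_round F0 \<Phi>) \<Longrightarrow> dot_terminated \<alpha>' \<Longrightarrow>
       (\<alpha>', n) \<in> set (zip (prompt_addrs F0 \<Phi>) ns)"
  then have "(\<alpha>2, n) \<in> set (zip (prompt_addrs F0 \<Phi>) ns)" using assms(2,4) by blast
  with \<open>distinct ns\<close> \<open>(\<alpha>1, n) \<in> _\<close> show ?thesis
    by (auto simp: in_set_zip nth_eq_iff_index_eq)
qed

lemma bot_number_unique_pos: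
  assumes "(Bot, \<alpha>1 @ decimal n) \<in> set (pos F0 tp k)" "(Bot, \<alpha>2 @ decimal n) \<in> set (pos F0 tp k)"
    and "dot_terminated \<alpha>1" "dot_terminated \<alpha>2"
  shows "\<alpha>1 = \<alpha>2"
  using assms(1,2)
proof (induction k)
  case (Suc k)
  let ?\<Phi> = "pos F0 tp k"
  have old_vs_new: False
    if "(Bot, \<alpha> @ decimal n) \<in> set ?\<Phi>" "(Bot, \<alpha>' @ decimal n) \<in> set (bot_round F0 ?\<Phi>)"
      "dot_terminated \<alpha>" "dot_terminated \<alpha>'" for \<alpha> \<alpha>'
    using used_nums_memI[OF that(1,3)] bot_round_number_fresh[OF that(2,4)] by blast
  show ?case
    using bot_move_Suc[OF Suc.prems(1)] bot_move_Suc[OF Suc.prems(2)]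
  proof (elim disjE)
    assume "(Bot, \<alpha>1 @ decimal n) \<in> set ?\<Phi>" "(Bot, \<alpha>2 @ decimal n) \<in> set ?\<Phi>"
    then show ?thesis by (rule Suc.IH)
  next
    assume "(Bot, \<alpha>1 @ decimal n) \<in> set (bot_round F0 ?\<Phi>)" "(Bot, \<alpha>2 @ decimal n) \<in> set (bot_round F0 ?\<Phi>)"
    then show ?thesis using bot_round_number_unique assms(3,4) by blast
  qed (use old_vs_new assms(3,4) in blast)+
qed simp

lemma bot_number_unique:
  assumes "(Bot, \<alpha>1 @ decimal n) \<in> Omega F0 tp" "(Bot, \<alpha>2 @ decimal n) \<in> Omega F0 tp"
    and "dot_terminated \<alpha>1" "dot_terminated \<alpha>2"
  shows "\<alpha>1 = \<alpha>2"
proof -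
  obtain k1 k2 where "(Bot, \<alpha>1 @ decimal n) \<in> set (pos F0 tp k1)" "(Bot, \<alpha>2 @ decimal n) \<in> set (pos F0 tp k2)"
    using assms(1,2) by (auto simp: mem_Omega)
  then have "(Bot, \<alpha>1 @ decimal n) \<in> set (pos F0 tp (max k1 k2))"
      "(Bot, \<alpha>2 @ decimal n) \<in> set (pos F0 tp (max k1 k2))"
    using pos_mono[of k1 "max k1 k2" F0 tp] pos_mono[of k2 "max k1 k2" F0 tp] by auto
  then show ?thesis using bot_number_unique_pos assms(3,4) by blast
qed

text \<open>The bitstrings of a funit are spelled out in its address.\<close>
lemma fheight_le_addr: "is_funit F0 f \<Longrightarrow> fheight f \<le> length (faddr F0 f)"
  unfolding fheight_def faddr_def by (rule Max.boundedI) (auto intro: addr_length funit_wf)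

lemma active_below_prompt_height:
  assumes "fun_active F0 \<Phi> f"
  shows "fheight f < prompt_height F0 \<Phi>"
proof -
  let ?N = "Suc (Max (insert 0 ((length \<circ> snd) ` set \<Phi>)))"
  have "fheight g < ?N" if active: "fun_active F0 \<Phi> g" for g
  proof -
    obtain pl \<beta> where g: "is_funit F0 g" "(pl, faddr F0 g @ \<beta>) \<in> set \<Phi>"
      using active by (auto simp: fun_active_def)
    have "fheight g \<le> length (faddr F0 g @ \<beta>)" using fheight_le_addr[OF g(1)] by simp
    also have "\<dots> \<le> Max (insert 0 ((length \<circ> snd) ` set \<Phi>))"
      using g(2) by (intro Max_ge) force+
    finally show ?thesis by simp
  qed
  then have "\<exists>n. \<forall>g. fun_active F0 \<Phi> g \<longrightarrow> fheight g < n" by blast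
  then have "\<forall>g. fun_active F0 \<Phi> g \<longrightarrow> fheight g < prompt_height F0 \<Phi>"
    unfolding prompt_height_def by (rule LeastI_ex)
  then show ?thesis using assms by blast
qed

definition restriction :: "nat \<Rightarrow> cunit \<Rightarrow> funit" where
  "restriction h L = (fst L, map (\<lambda>y. map y [0..<h]) (snd L))"

lemma restriction_bits_prefix: "list_all2 bits_prefix (snd (restriction h L)) (snd L)"
  by (simp add: restriction_def list_all2_conv_all_nth bits_prefix_def)

lemma restriction_prompt:
  assumes "is_politeral_unit F0 L" "snd L \<noteq> []"
  shows "is_prompt F0 \<Phi> (restriction (prompt_height F0 \<Phi>) L)"
    and "fheight (restriction (prompt_height F0 \<Phi>) L) = prompt_height F0 \<Phi>"
proof -
  let ?h = "prompt_height F0 \<Phi>"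
  have "length ` set (snd (restriction ?h L)) = {?h}"
    using assms(2) by (simp add: restriction_def image_image image_constant_conv)
  then show height: "fheight (restriction ?h L) = ?h" by (simp add: fheight_def)
  then show "is_prompt F0 \<Phi> (restriction ?h L)" using assms
    by (auto simp: is_prompt_def is_politeral_funit_def is_politeral_unit_def is_funit_def
        is_cunit_def restriction_def fregular_def)
qed

lemma bot_moves_in_restriction:
  assumes "is_politeral_unit F0 L" "snd L \<noteq> []"
  shows "\<exists>a. (Bot, faddr F0 (restriction (prompt_height F0 (pos F0 tp k)) L) @ decimal a)
               \<in> set (pos F0 tp (Suc k))"
  using bot_round_covers_prompt[OF restriction_prompt(1)[OF assms]] by (auto simp: Let_def)

lemma prompt_height_grows:
  assumes "is_politeral_unit F0 L" "snd L \<noteq> []"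
  shows "k \<le> prompt_height F0 (pos F0 tp k)"
proof (induction k)
  case (Suc k)
  let ?f = "restriction (prompt_height F0 (pos F0 tp k)) L"
  have "is_funit F0 ?f"
    using restriction_prompt(1)[OF assms] by (simp add: is_prompt_def is_politeral_funit_def)
  then have "fun_active F0 (pos F0 tp (Suc k)) ?f"
    using bot_moves_in_restriction[OF assms] unfolding fun_active_def by blast
  then have "fheight ?f < prompt_height F0 (pos F0 tp (Suc k))"
    by (rule active_below_prompt_height)
  then show ?case using Suc.IH restriction_prompt(2)[OF assms] by simp
qed simp

lemma bot_move_in_unit_proj:
  assumes "is_cunit F0 L" "is_funit F0 f" "fst f = fst L" "list_all2 bits_prefix (snd f) (snd L)"
    and "(Bot, faddr F0 f @ decimal a) \<in> Omega F0 tp"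
  shows "(Bot, decimal a) \<in> unit_proj F0 tp L"
proof -
  have "(Bot, decimal a) \<in> proj F0 (fst L) (snd L) {(Bot, faddr F0 f @ decimal a)}"
    using proj_addressed_move[OF funit_wf[OF assms(2)] cunit_wf[OF assms(1)] decimal_no_dot decimal_no_dot]
      assms(3,4) by (simp add: faddr_def)
  then show ?thesis
    unfolding unit_proj_def using proj_mono[of "{_}" "Omega F0 tp"] assms(5) by blast
qed

lemma bot_move_from_unit_proj:
  assumes "is_cunit F0 L" "is_funit F0 f" "(Bot, decimal a) \<in> unit_proj F0 tp L"
    and "(Bot, faddr F0 f @ decimal a) \<in> Omega F0 tp"
  shows "fst L = fst f \<and> list_all2 bits_prefix (snd f) (snd L)"
proof -
  have wfL: "wf_path F0 (fst L) (snd L)" using assms(1) by (rule cunit_wf)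
  obtain s where s: "s \<in> Omega F0 tp" "(Bot, decimal a) \<in> proj F0 (fst L) (snd L) {s}"
    using assms(3) proj_via_singletons unfolding unit_proj_def by blast
  obtain m where "s = (Bot, m)" using proj_label[OF s(2)] by auto
  moreover obtain g n where g: "is_funit F0 g" "m = faddr F0 g @ decimal n"
    using bot_move_shape s(1) calculation by blast
  ultimately have "n = a"
    using s(2) proj_addressed_move[OF funit_wf[OF g(1)] wfL decimal_no_dot decimal_no_dot]
    by (auto simp: faddr_def decimal_inj)
  then have "faddr F0 g = faddr F0 f"
    using bot_number_unique s(1) \<open>s = (Bot, m)\<close> g(2) assms(4) faddr_dot_terminated by metis
  then have "(Bot, decimal a) \<in> proj F0 (fst L) (snd L) {(Bot, addr F0 (fst f) (snd f) @ decimal a)}"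
    using s(2) \<open>s = (Bot, m)\<close> g(2) \<open>n = a\<close> by (simp add: faddr_def)
  then show ?thesis
    using proj_addressed_move[OF funit_wf[OF assms(2)] wfL decimal_no_dot decimal_no_dot] by blast
qed

lemma bitstrings_eq_by_prefixes:
  assumes "\<And>n. \<exists>h\<ge>n. list_all2 bits_prefix (map (\<lambda>y. map y [0..<h]) xs) ys"
  shows "xs = ys"
proof (rule nth_equalityI)
  show "length xs = length ys" using assms[of 0] by (auto dest: list_all2_lengthD)
next
  fix j assume j: "j < length xs"
  show "xs ! j = ys ! j"
  proof
    fix i
    obtain h where "h \<ge> Suc i" "list_all2 bits_prefix (map (\<lambda>y. map y [0..<h]) xs) ys"
      using assms by blast
    then show "(xs ! j) i = (ys ! j) i"
      using j by (auto simp: list_all2_conv_all_nth bits_prefix_def)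
  qed
qed

text \<open>The \<open>\<bottom>\<close>-part of its projection determines a politeral unit with a nonempty tuple:
  \<open>\<bottom>\<close> makes in it moves of unboundedly growing height, and each such move is seen only by
  units whose bitstrings extend those of the move.\<close>
lemma bot_proj_determines_unit:
  assumes L: "is_politeral_unit F0 L" "snd L \<noteq> []" and L': "is_cunit F0 L'"
    and eq: "{\<beta>. (Bot, \<beta>) \<in> unit_proj F0 tp L} = {\<beta>. (Bot, \<beta>) \<in> unit_proj F0 tp L'}"
  shows "L = L'"
proof -
  have cu: "is_cunit F0 L" using L(1) by (simp add: is_politeral_unit_def)
  have seen: "fst L' = fst L \<and> list_all2 bits_prefix (snd (restriction (prompt_height F0 (pos F0 tp k)) L)) (snd L')"
    for k
  proof -
    let ?f = "restriction (prompt_height F0 (pos F0 tp k)) L"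
    have f: "is_funit F0 ?f"
      using restriction_prompt(1)[OF L] by (simp add: is_prompt_def is_politeral_funit_def)
    obtain a where a: "(Bot, faddr F0 ?f @ decimal a) \<in> Omega F0 tp"
      using bot_moves_in_restriction[OF L] mem_Omega by blast
    have "(Bot, decimal a) \<in> unit_proj F0 tp L"
      using bot_move_in_unit_proj[OF cu f _ restriction_bits_prefix a] by (simp add: restriction_def)
    then have "(Bot, decimal a) \<in> unit_proj F0 tp L'" using eq by blast
    then show ?thesis using bot_move_from_unit_proj[OF L' f _ a] by (simp add: restriction_def)
  qed
  have "snd L = snd L'"
  proof (rule bitstrings_eq_by_prefixes)
    fix n
    have "n \<le> prompt_height F0 (pos F0 tp n)" by (rule prompt_height_grows[OF L])
    then show "\<exists>h\<ge>n. list_all2 bits_prefix (map (\<lambda>y. map y [0..<h]) (snd L)) (snd L')"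
      using seen[of n] by (auto simp: restriction_def)
  qed
  then show ?thesis using seen[of 0] by (simp add: prod_eq_iff)
qed

lemma finite_if_subsingleton: "(\<And>x y. x \<in> S \<Longrightarrow> y \<in> S \<Longrightarrow> x = y) \<Longrightarrow> finite S"
proof (cases "S = {}")
  case False
  then obtain x where "x \<in> S" by blast
  moreover assume "\<And>x y. x \<in> S \<Longrightarrow> y \<in> S \<Longrightarrow> x = y"
  ultimately have "S = {x}" by blast
  then show ?thesis by simp
qed simp

text \<open>Hence each unit has only countably many opposite units: those with an empty tuple are
  determined by their oformula, and at most one has a nonempty tuple.\<close>
lemma opposites_countable: "countable {L. opposite F0 tp L M}"
proof -
  have "{L. opposite F0 tp L M} \<subseteq> range (\<lambda>p. (p, [])) \<union> {L. snd L \<noteq> [] \<and> opposite F0 tp L M}"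
    by auto
  moreover have "finite {L. snd L \<noteq> [] \<and> opposite F0 tp L M}"
  proof (rule finite_if_subsingleton)
    fix L L' assume "L \<in> {L. snd L \<noteq> [] \<and> opposite F0 tp L M}" "L' \<in> {L. snd L \<noteq> [] \<and> opposite F0 tp L M}"
    then have opp: "opposite F0 tp L M" "opposite F0 tp L' M" and "snd L \<noteq> []" by auto
    have "{\<beta>. (Bot, \<beta>) \<in> unit_proj F0 tp K} = {\<beta>. (Top, \<beta>) \<in> unit_proj F0 tp M}"
      if "opposite F0 tp K M" for K
      using that unfolding opposite_def by (metis neg_pl.simps(2))
    moreover have "is_politeral_unit F0 L" "is_cunit F0 L'"
      using opp by (auto simp: opposite_def is_politeral_unit_def)
    ultimately show "L = L'" using bot_proj_determines_unit \<open>snd L \<noteq> []\<close> opp by metis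
  qed
  ultimately show ?thesis by (meson countable_Un countable_finite countable_image countableI_type
      countable_subset)
qed

section \<open>Strict driving\<close>

lemma subunit_prefix: "subunit F0 E H \<Longrightarrow> prefix (fst H) (fst E) \<and> prefix (snd H) (snd E)"
  unfolding subunit_def
proof (induction rule: rtranclp_induct)
  case (step C D)
  then have "prefix (fst D) (fst C) \<and> prefix (snd D) (snd C)" by (auto simp: child_def)
  then show ?case using step.IH by (meson prefix_order.trans)
qed simp

lemma subunit_refl: "subunit F0 H H"
  unfolding subunit_def by simp

lemma subunit_trans_child: "subunit F0 U C \<Longrightarrow> child F0 C H \<Longrightarrow> subunit F0 U H"
  unfolding subunit_def by (rule rtranclp.rtrancl_into_rtrancl)

lemma proper_subunit_child:
  "subunit F0 E H \<Longrightarrow> E \<noteq> H \<Longrightarrow> \<exists>C. child F0 C H \<and> subunit F0 E C"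
  unfolding subunit_def by (metis rtranclp.cases)

lemma child_length: "child F0 C H \<Longrightarrow> length (fst C) = Suc (length (fst H))"
  by (auto simp: child_def)

lemma proper_subunit_length:
  assumes "subunit F0 E H" "E \<noteq> H"
  shows "length (fst H) < length (fst E)"
proof -
  obtain C where "child F0 C H" "subunit F0 E C" using proper_subunit_child assms by blast
  then have "length (fst C) = Suc (length (fst H))" "length (fst C) \<le> length (fst E)"
    using child_length prefix_length_le subunit_prefix by blast+
  then show ?thesis by simp
qed

lemma prefix_same_length: "prefix a c \<Longrightarrow> prefix b c \<Longrightarrow> length a = length b \<Longrightarrow> a = b"
  using prefix_length_prefix[of a c b] prefix_length_prefix[of b c a] by auto

definition resolved_path :: "'a form \<Rightarrow> resolution \<Rightarrow> cunit \<Rightarrow> cunit \<Rightarrow> bool" where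
  "resolved_path F0 A E H \<longleftrightarrow>
     \<not> (\<exists>U. is_quest_unit F0 U \<and> subunit F0 E U \<and> U \<noteq> E \<and> subunit F0 U H) \<and>
     (\<forall>U. is_bang_unit F0 U \<and> subunit F0 E U \<and> U \<noteq> E \<and> subunit F0 U H \<longrightarrow>
        (\<exists>x. A U = Some x \<and> subunit F0 E (resolvent U x)))"

lemma strictly_drives_resolved_path:
  "strictly_drives F0 A E G \<Longrightarrow> \<exists>H. subunit F0 G H \<and> subunit F0 E H \<and> resolved_path F0 A E H"
  unfolding strictly_drives_def drives_def smallest_common_superunit_def resolved_path_def by blast

lemma resolved_path_child: "resolved_path F0 A E H \<Longrightarrow> child F0 C H \<Longrightarrow> resolved_path F0 A E C"
  unfolding resolved_path_def using subunit_trans_child by blast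

lemma resolved_path_child_tuple:
  assumes ch: "child F0 C H" and below: "subunit F0 E C" and ne: "E \<noteq> H"
    and path: "resolved_path F0 A E H"
  shows "snd C = (if is_binary_f (subf F0 (fst H)) then snd H else snd H @ [the (A H)])"
proof -
  have sH: "subunit F0 E H" using below ch by (rule subunit_trans_child)
  have H: "is_cunit F0 H" using ch by (simp add: child_def)
  show ?thesis
  proof (cases "is_binary_f (subf F0 (fst H))")
    case True
    then show ?thesis using ch by (auto simp: child_def is_binary_f_def is_modal_f_def)
  next
    case False
    then obtain y a where y: "snd C = snd H @ [y]"
      and a: "subf F0 (fst H) = Some (Bang a) \<or> subf F0 (fst H) = Some (Quest a)"
      using ch by (auto simp: child_def is_modal_f_def)
    have "\<not> is_quest_unit F0 H" using path sH ne[symmetric] subunit_refl unfolding resolved_path_def by blast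
    then have bang: "is_bang_unit F0 H" using a H by (auto simp: is_quest_unit_def is_bang_unit_def)
    have "\<And>U. is_bang_unit F0 U \<Longrightarrow> subunit F0 E U \<Longrightarrow> U \<noteq> E \<Longrightarrow> subunit F0 U H \<Longrightarrow>
        \<exists>x. A U = Some x \<and> subunit F0 E (resolvent U x)"
      using path unfolding resolved_path_def by blast
    then obtain x where x: "A H = Some x" "subunit F0 E (resolvent H x)"
      using bang sH ne[symmetric] subunit_refl by blast
    have "prefix (snd H @ [x]) (snd E)" using subunit_prefix[OF x(2)] by (simp add: resolvent_def)
    moreover have "prefix (snd H @ [y]) (snd E)" using subunit_prefix[OF below] y by simp
    ultimately have "snd H @ [y] = snd H @ [x]" by (intro prefix_same_length) simp_all
    then show ?thesis using False x(1) y by simp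
  qed
qed

lemma resolved_path_unique:
  assumes "subunit F0 E1 H" "subunit F0 E2 H" "fst E1 = fst E2"
    and "resolved_path F0 A E1 H" "resolved_path F0 A E2 H"
  shows "E1 = E2"
  using assms
proof (induction "length (fst E1) - length (fst H)" arbitrary: H rule: less_induct)
  case less
  show ?case
  proof (cases "E1 = H \<or> E2 = H")
    case True
    have "E1 = H \<longleftrightarrow> E2 = H"
      using proper_subunit_length[OF less.prems(1)] proper_subunit_length[OF less.prems(2)] less.prems(3)
      by (cases "E1 = H"; cases "E2 = H") auto
    then show ?thesis using True by simp
  next
    case False
    obtain C1 where C1: "child F0 C1 H" "subunit F0 E1 C1"
      using proper_subunit_child less.prems(1) False by blast
    obtain C2 where C2: "child F0 C2 H" "subunit F0 E2 C2"
      using proper_subunit_child less.prems(2) False by blast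
    have "prefix (fst C1) (fst E1)" "prefix (fst C2) (fst E1)"
      using subunit_prefix[OF C1(2)] subunit_prefix[OF C2(2)] less.prems(3) by simp_all
    moreover have "length (fst C1) = length (fst C2)"
      using child_length[OF C1(1)] child_length[OF C2(1)] by simp
    ultimately have "fst C1 = fst C2" by (rule prefix_same_length)
    moreover have "snd C1 = snd C2"
      using resolved_path_child_tuple[OF C1 _ less.prems(4)] resolved_path_child_tuple[OF C2 _ less.prems(5)]
        False by simp
    ultimately have "C2 = C1" by (simp add: prod_eq_iff)
    have "length (fst C1) \<le> length (fst E1)" using subunit_prefix[OF C1(2)] prefix_length_le by blast
    then have closer: "length (fst E1) - length (fst C1) < length (fst E1) - length (fst H)"
      using child_length[OF C1(1)] by simp
    show ?thesis
      using less.hyps[OF closer C1(2) _ less.prems(3) resolved_path_child[OF less.prems(4) C1(1)]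
          resolved_path_child[OF less.prems(5) C1(1)]] C2(2) \<open>C2 = C1\<close> by simp
  qed
qed

text \<open>Only countably many units strictly drive a given unit: the driving superunit is one of
  the finitely many superunits of \<open>G\<close>, and below it the driver is fixed by its oformula.\<close>
lemma strict_drivers_countable: "countable {E. strictly_drives F0 A E G}"
proof -
  let ?D = "\<lambda>H p. {E. fst E = p \<and> subunit F0 E H \<and> resolved_path F0 A E H}"
  have cover: "{E. strictly_drives F0 A E G} \<subseteq> (\<Union>H\<in>{H. subunit F0 G H}. \<Union>p. ?D H p)"
  proof
    fix E assume "E \<in> {E. strictly_drives F0 A E G}"
    then obtain H where "subunit F0 G H" "subunit F0 E H" "resolved_path F0 A E H"
      using strictly_drives_resolved_path by blast
    then show "E \<in> (\<Union>H\<in>{H. subunit F0 G H}. \<Union>p. ?D H p)" by blast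
  qed
  have "{H. subunit F0 G H} \<subseteq> set (prefixes (fst G)) \<times> set (prefixes (snd G))"
    using subunit_prefix by fastforce
  then have "countable {H. subunit F0 G H}" by (rule countable_subset) (simp add: countable_finite)
  moreover have "finite (?D H p)" for H p
  proof (rule finite_if_subsingleton)
    fix E1 E2 assume "E1 \<in> ?D H p" "E2 \<in> ?D H p"
    then show "E1 = E2" using resolved_path_unique[of F0 E1 H E2 A] by simp
  qed
  ultimately have "countable (\<Union>H\<in>{H. subunit F0 G H}. \<Union>p. ?D H p)"
    by (blast intro: countable_UN countable_finite countableI_type)
  then show ?thesis using cover by (rule countable_subset[rotated])
qed

section \<open>Visibility chains and the theorem\<close>

text \<open>Units opposite to some unit strictly driving \<open>X\<close>: the possible last links of a
  visibility chain ending before \<open>X\<close>.\<close>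
definition opposite_to_drivers :: "'a form \<Rightarrow> (nat \<Rightarrow> string option) \<Rightarrow> resolution \<Rightarrow> cunit \<Rightarrow> cunit set" where
  "opposite_to_drivers F0 tp A X = {L. \<exists>M. strictly_drives F0 A M X \<and> opposite F0 tp L M}"

lemma opposite_to_drivers_countable: "countable (opposite_to_drivers F0 tp A X)"
proof -
  have "opposite_to_drivers F0 tp A X = (\<Union>M\<in>{M. strictly_drives F0 A M X}. {L. opposite F0 tp L M})"
    by (auto simp: opposite_to_drivers_def)
  then show ?thesis by (simp add: strict_drivers_countable opposites_countable)
qed

text \<open>The heads of visibility chains with \<open>n + 1\<close> links whose tail strictly drives \<open>G\<close>.\<close>
primrec chain_heads :: "'a form \<Rightarrow> (nat \<Rightarrow> string option) \<Rightarrow> resolution \<Rightarrow> cunit \<Rightarrow> nat \<Rightarrow> cunit set" where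
  "chain_heads F0 tp A G 0 = opposite_to_drivers F0 tp A G"
| "chain_heads F0 tp A G (Suc n) = (\<Union>L\<in>chain_heads F0 tp A G n. opposite_to_drivers F0 tp A L)"

lemma chain_heads_countable: "countable (chain_heads F0 tp A G n)"
  by (induction n) (simp_all add: opposite_to_drivers_countable)

lemma vis_chain_tl:
  assumes "vis_chain F0 tp A (c # cs)" "cs \<noteq> []"
  shows "vis_chain F0 tp A cs"
proof -
  have "strictly_drives F0 A (snd (cs ! i)) (fst (cs ! Suc i))" if "Suc i < length cs" for i
  proof -
    have "Suc (Suc i) < length (c # cs)" using that by simp
    then show ?thesis using assms(1) unfolding vis_chain_def by fastforce
  qed
  then show ?thesis using assms unfolding vis_chain_def by simp
qed

lemma vis_chain_head_in_chain_heads: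
  "vis_chain F0 tp A cs \<Longrightarrow> strictly_drives F0 A (snd (last cs)) G \<Longrightarrow>
     \<exists>n. fst (hd cs) \<in> chain_heads F0 tp A G n"
proof (induction cs)
  case (Cons c cs)
  have opp: "opposite F0 tp (fst c) (snd c)" using Cons.prems(1) by (simp add: vis_chain_def)
  show ?case
  proof (cases "cs = []")
    case True
    then have "strictly_drives F0 A (snd c) G" using Cons.prems(2) by simp
    then have "fst c \<in> chain_heads F0 tp A G 0"
      using opp unfolding chain_heads.simps opposite_to_drivers_def by blast
    then show ?thesis by (metis list.sel(1))
  next
    case False
    obtain n where n: "fst (hd cs) \<in> chain_heads F0 tp A G n"
      using Cons.IH vis_chain_tl[OF Cons.prems(1) False] Cons.prems(2) False by auto
    have "Suc 0 < length (c # cs)" using False by simp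
    then have "strictly_drives F0 A (snd ((c # cs) ! 0)) (fst ((c # cs) ! Suc 0))"
      using Cons.prems(1) unfolding vis_chain_def by blast
    then have "strictly_drives F0 A (snd c) (fst (hd cs))" using False by (simp add: hd_conv_nth)
    then have "fst c \<in> chain_heads F0 tp A G (Suc n)"
      using n opp unfolding chain_heads.simps opposite_to_drivers_def by blast
    then show ?thesis by (metis list.sel(1))
  qed
qed (simp add: vis_chain_def)

theorem lemma7p7:
  fixes F0 :: "'a form" and tp :: "nat \<Rightarrow> string option" and A :: resolution and G :: cunit
  assumes "legal_run F0 (Omega F0 tp)"
    and "is_cunit F0 G"
  shows "countable {E. is_cunit F0 E \<and> visible F0 tp A E G}"
proof -
  let ?Drivers = "\<lambda>X. {E. strictly_drives F0 A E X}"
  have "{E. is_cunit F0 E \<and> visible F0 tp A E G} \<subseteq>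
      ?Drivers G \<union> (\<Union>n. \<Union>L\<in>chain_heads F0 tp A G n. ?Drivers L)"
  proof
    fix E assume "E \<in> {E. is_cunit F0 E \<and> visible F0 tp A E G}"
    then consider "strictly_drives F0 A E G"
      | cs where "vis_chain F0 tp A cs" "strictly_drives F0 A E (fst (hd cs))"
          "strictly_drives F0 A (snd (last cs)) G"
      unfolding visible_def by blast
    then show "E \<in> ?Drivers G \<union> (\<Union>n. \<Union>L\<in>chain_heads F0 tp A G n. ?Drivers L)"
    proof cases
      case (2 cs)
      then obtain n where "fst (hd cs) \<in> chain_heads F0 tp A G n"
        using vis_chain_head_in_chain_heads by blast
      then show ?thesis using 2(2) by blast
    qed simp
  qed
  moreover have "countable (?Drivers G \<union> (\<Union>n. \<Union>L\<in>chain_heads F0 tp A G n. ?Drivers L))"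
    by (simp add: strict_drivers_countable chain_heads_countable)
  ultimately show ?thesis by (rule countable_subset)
qed

end
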